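(* Let $\Phi$ be the historical operator. For each of the following axioms there exists a standard rule $R$ satisfying the standard version of the axiom such that the general rule $\Phi(R)$ violates the general version of that axiom: claims monotonicity, composition up, composition down, self-duality, population monotonicity, and consistency.
   Context: Agents are elements of $\mathbb{N}$; $N$ denotes a nonempty finite subset of $\mathbb{N}$. A (standard) claims problem is a triple $(N,c,E)$ with $c\in\mathbb{R}_+^N$, $E\in\mathbb{R}_+$, $C=\sum_{i\in N}c_i>0$ and $E\le C$. An allocation for it is $x\in\mathbb{R}^N$ with $0\le x_i\le c_i$ and $\sum_ix_i=E$. A standard rule $R$ assigns to each standard claims problem an allocation $R(N,c,E)$. A history for $N$ is a finite sequence $h=\{(c^{(t)},x^{(t)})\}_{t=1}^{|T|}$ where for each $t$, $c^{(t)}\in\mathbb{R}_+^N$ and $x^{(t)}$ is an allocation of the standard problem $(N,c^{(t)},\sum_ix_i^{(t)})$. A historical claims problem is $(N,c,E,h)$ with $(N,c,E)$ a standard claims problem and $h$ a history for $N$; a general rule $S$ assigns to each an allocation of $(N,c,E)$. For $M\subseteq N$, $h_M$ denotes the history obtained by restricting every $c^{(t)}$ and $x^{(t)}$ to coordinates in $M$. Let $\Delta^c_i=\sum_tc^{(t)}_i$, $\Delta^x_i=\sum_tx^{(t)}_i$, $\widetilde{c}_i=c_i+\Delta^c_i-\Delta^x_i$. Historical operator: for a standard rule $R$, $\Phi_i(R)(N,c,E,h)=\min\{c_i,R_i(N,\widetilde{c},E)+\lambda\}$, where $\lambda\in\mathbb{R}_+$ is such that these amounts sum to $E$ (such $\lambda$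 exists and the resulting vector does not depend on its choice). Standard axioms: claims monotonicity: for $i\in N$ and $c'_i>c_i$, $R_i(N,(c'_i,c_{-i}),E)\ge R_i(N,c,E)$; composition up: for $E_1,E_2>0$ with $E_1+E_2=E$, $R(N,c,E)=R(N,c,E_1)+R(N,c-R(N,c,E_1),E_2)$; composition down: for $E<E'\le C$, $R(N,c,E)=R(N,R(N,c,E'),E)$; self-duality: $R(N,c,C-E)=c-R(N,c,E)$; population monotonicity: if $N\subseteq N'$, $(N',c',E)$ is a problem with $c'_N=c$, then $R_i(N',c',E)\le R_i(N,c,E)$ for all $i\in N$; consistency: for $M\subset N$ and $i\in M$, $R_i(N,c,E)=R_i(M,c_M,\sum_{k\in M}R_k(N,c,E))$. General axioms: the same conditions for $S$ with the history held fixed: claims monotonicity: $S_i(N,(c'_i,c_{-i}),E,h)\ge S_i(N,c,E,h)$ for $c'_i>c_i$; composition up: $S(N,c,E,h)=S(N,c,E_1,h)+S(N,c-S(N,c,E_1,h),E_2,h)$; composition down: $S(N,c,E,h)=S(N,S(N,c,E',h),E,h)$ for $E<E'\le C$; self-duality: $S(N,c,C-E,h)=c-S(N,c,E,h)$; population monotonicity: if $N\subseteq N'$, $c'_N=c$ and $h'_N=h$, then $S_i(N',c',E,h')\le S_i(N,c,E,h)$ for all $i\in N$; consistency: for $M\subset N$, $i\in M$, $S_i(N,c,E,h)=S_i(M,c_M,E_M,h_M)$ with $E_M=\sum_{k\in M}S_k(N,c,E,h)$. *)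

theory Defs
  imports Complex_Main "HOL-Library.FuncSet"
begin

text \<open>Agents are naturals; a vector in R^N is an extensional function on N
  (value undefined outside N), so that it is determined by its coordinates in N.\<close>

type_synonym vec = "nat \<Rightarrow> real"
type_synonym history = "(vec \<times> vec) list"

definition std_problem :: "nat set \<Rightarrow> vec \<Rightarrow> real \<Rightarrow> bool" where
  "std_problem N c E \<longleftrightarrow> finite N \<and> N \<noteq> {} \<and> c \<in> extensional N \<and>
     (\<forall>i\<in>N. 0 \<le> c i) \<and> 0 \<le> E \<and> 0 < (\<Sum>i\<in>N. c i) \<and> E \<le> (\<Sum>i\<in>N. c i)"

definition allocation :: "nat set \<Rightarrow> vec \<Rightarrow> real \<Rightarrow> vec \<Rightarrow> bool" where
  "allocation N c E x \<longleftrightarrow> x \<in> extensional N \<and> (\<forall>i\<in>N. 0 \<le> x i \<and> x i \<le> c i) \<and>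
     (\<Sum>i\<in>N. x i) = E"

definition std_rule :: "(nat set \<Rightarrow> vec \<Rightarrow> real \<Rightarrow> vec) \<Rightarrow> bool" where
  "std_rule R \<longleftrightarrow> (\<forall>N c E. std_problem N c E \<longrightarrow> allocation N c E (R N c E))"

definition is_history :: "nat set \<Rightarrow> history \<Rightarrow> bool" where
  "is_history N h \<longleftrightarrow> (\<forall>(ct, xt)\<in>set h. ct \<in> extensional N \<and> xt \<in> extensional N \<and>
     (\<forall>i\<in>N. 0 \<le> ct i) \<and> allocation N ct (\<Sum>i\<in>N. xt i) xt)"

definition hist_problem :: "nat set \<Rightarrow> vec \<Rightarrow> real \<Rightarrow> history \<Rightarrow> bool" where
  "hist_problem N c E h \<longleftrightarrow> std_problem N c E \<and> is_history N h"

definition restrict_history :: "history \<Rightarrow> nat set \<Rightarrow> history" where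
  "restrict_history h M = map (\<lambda>(ct, xt). (restrict ct M, restrict xt M)) h"

definition ctilde :: "nat set \<Rightarrow> vec \<Rightarrow> history \<Rightarrow> vec" where
  "ctilde N c h = restrict (\<lambda>i. c i + (\<Sum>p\<leftarrow>h. fst p i) - (\<Sum>p\<leftarrow>h. snd p i)) N"

definition Phi :: "(nat set \<Rightarrow> vec \<Rightarrow> real \<Rightarrow> vec) \<Rightarrow> nat set \<Rightarrow> vec \<Rightarrow> real \<Rightarrow> history \<Rightarrow> vec" where
  "Phi R N c E h =
    (let ct = ctilde N c h;
         lam = (SOME l. 0 \<le> l \<and> (\<Sum>i\<in>N. min (c i) (R N ct E i + l)) = E)
     in restrict (\<lambda>i. min (c i) (R N ct E i + lam)) N)"

definition std_claims_mono :: "(nat set \<Rightarrow> vec \<Rightarrow> real \<Rightarrow> vec) \<Rightarrow> bool" where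
  "std_claims_mono R \<longleftrightarrow> (\<forall>N c E i ci'. std_problem N c E \<and> i \<in> N \<and> ci' > c i \<longrightarrow>
      R N (c(i := ci')) E i \<ge> R N c E i)"

definition std_comp_up :: "(nat set \<Rightarrow> vec \<Rightarrow> real \<Rightarrow> vec) \<Rightarrow> bool" where
  "std_comp_up R \<longleftrightarrow> (\<forall>N c E E1 E2. std_problem N c E \<and> 0 < E1 \<and> 0 < E2 \<and> E1 + E2 = E \<longrightarrow>
      (\<forall>i\<in>N. R N c E i = R N c E1 i + R N (restrict (\<lambda>k. c k - R N c E1 k) N) E2 i))"

definition std_comp_down :: "(nat set \<Rightarrow> vec \<Rightarrow> real \<Rightarrow> vec) \<Rightarrow> bool" where
  "std_comp_down R \<longleftrightarrow> (\<forall>N c E E'. std_problem N c E \<and> E < E' \<and> E' \<le> (\<Sum>i\<in>N. c i) \<longrightarrow>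
      (\<forall>i\<in>N. R N c E i = R N (R N c E') E i))"

definition std_self_dual :: "(nat set \<Rightarrow> vec \<Rightarrow> real \<Rightarrow> vec) \<Rightarrow> bool" where
  "std_self_dual R \<longleftrightarrow> (\<forall>N c E. std_problem N c E \<longrightarrow>
      (\<forall>i\<in>N. R N c ((\<Sum>k\<in>N. c k) - E) i = c i - R N c E i))"

definition std_pop_mono :: "(nat set \<Rightarrow> vec \<Rightarrow> real \<Rightarrow> vec) \<Rightarrow> bool" where
  "std_pop_mono R \<longleftrightarrow> (\<forall>N N' c' E. N \<subseteq> N' \<and> std_problem N' c' E \<and>
      std_problem N (restrict c' N) E \<longrightarrow>
      (\<forall>i\<in>N. R N' c' E i \<le> R N (restrict c' N) E i))"

definition std_consistent :: "(nat set \<Rightarrow> vec \<Rightarrow> real \<Rightarrow> vec) \<Rightarrow> bool" where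
  "std_consistent R \<longleftrightarrow> (\<forall>N M c E. std_problem N c E \<and> M \<subset> N \<and>
      std_problem M (restrict c M) (\<Sum>k\<in>M. R N c E k) \<longrightarrow>
      (\<forall>i\<in>M. R N c E i = R M (restrict c M) (\<Sum>k\<in>M. R N c E k) i))"

definition gen_claims_mono :: "(nat set \<Rightarrow> vec \<Rightarrow> real \<Rightarrow> history \<Rightarrow> vec) \<Rightarrow> bool" where
  "gen_claims_mono S \<longleftrightarrow> (\<forall>N c E h i ci'. hist_problem N c E h \<and> i \<in> N \<and> ci' > c i \<longrightarrow>
      S N (c(i := ci')) E h i \<ge> S N c E h i)"

definition gen_comp_up :: "(nat set \<Rightarrow> vec \<Rightarrow> real \<Rightarrow> history \<Rightarrow> vec) \<Rightarrow> bool" where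
  "gen_comp_up S \<longleftrightarrow> (\<forall>N c E h E1 E2. hist_problem N c E h \<and> 0 < E1 \<and> 0 < E2 \<and> E1 + E2 = E \<longrightarrow>
      (\<forall>i\<in>N. S N c E h i = S N c E1 h i + S N (restrict (\<lambda>k. c k - S N c E1 h k) N) E2 h i))"

definition gen_comp_down :: "(nat set \<Rightarrow> vec \<Rightarrow> real \<Rightarrow> history \<Rightarrow> vec) \<Rightarrow> bool" where
  "gen_comp_down S \<longleftrightarrow> (\<forall>N c E h E'. hist_problem N c E h \<and> E < E' \<and> E' \<le> (\<Sum>i\<in>N. c i) \<longrightarrow>
      (\<forall>i\<in>N. S N c E h i = S N (S N c E' h) E h i))"

definition gen_self_dual :: "(nat set \<Rightarrow> vec \<Rightarrow> real \<Rightarrow> history \<Rightarrow> vec) \<Rightarrow> bool" where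
  "gen_self_dual S \<longleftrightarrow> (\<forall>N c E h. hist_problem N c E h \<longrightarrow>
      (\<forall>i\<in>N. S N c ((\<Sum>k\<in>N. c k) - E) h i = c i - S N c E h i))"

definition gen_pop_mono :: "(nat set \<Rightarrow> vec \<Rightarrow> real \<Rightarrow> history \<Rightarrow> vec) \<Rightarrow> bool" where
  "gen_pop_mono S \<longleftrightarrow> (\<forall>N N' c' E h'. N \<subseteq> N' \<and> hist_problem N' c' E h' \<and>
      hist_problem N (restrict c' N) E (restrict_history h' N) \<longrightarrow>
      (\<forall>i\<in>N. S N' c' E h' i \<le> S N (restrict c' N) E (restrict_history h' N) i))"

definition gen_consistent :: "(nat set \<Rightarrow> vec \<Rightarrow> real \<Rightarrow> history \<Rightarrow> vec) \<Rightarrow> bool" where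
  "gen_consistent S \<longleftrightarrow> (\<forall>N M c E h. hist_problem N c E h \<and> M \<subset> N \<and>
      hist_problem M (restrict c M) (\<Sum>k\<in>M. S N c E h k) (restrict_history h M) \<longrightarrow>
      (\<forall>i\<in>M. S N c E h i = S M (restrict c M) (\<Sum>k\<in>M. S N c E h k) (restrict_history h M) i))"

end

theory Submission
  imports Defs
begin

(* Phi(R) applies R to the accumulated claims and then caps every award at the current claim,
   handing the excess back to the uncapped agents in equal amounts. This equal top-up ignores the
   structure of R, and each axiom breaks on a small three-agent example. The proportional rule fails
   self-duality, composition down, population monotonicity and consistency on one problem in which
   agent 2 carries a large unpaid claim from the past. A priority rule fails composition up, and a
   priority rule whose order of the first two agents depends on the claim of the last one fails
   claims monotonicity: raising that claim reorders the first two agents and thereby changes the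
   excess to be topped up. *)

lemma Phi_eqI:
  assumes "finite N" and "0 \<le> l"
    and "(\<Sum>i\<in>N. min (c i) (R N (ctilde N c h) E i + l)) = E"
  shows "Phi R N c E h = restrict (\<lambda>i. min (c i) (R N (ctilde N c h) E i + l)) N"
proof -
  define cap where "cap l' i = min (c i) (R N (ctilde N c h) E i + l')" for l' i
  define l' where "l' = (SOME l'. 0 \<le> l' \<and> sum (cap l') N = E)"
  have "0 \<le> l' \<and> sum (cap l') N = E"
    unfolding l'_def by (rule someI[of _ l]) (use assms in \<open>simp add: cap_def\<close>)
  then have sums: "sum (cap l') N = sum (cap l) N"
    using assms(3) by (simp add: cap_def)
  \<comment> \<open>the capped awards are monotone in the top-up, so equal totals force equal awards\<close>
  have same_caps: "cap a i = cap b i"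
    if "a \<le> b" "sum (cap a) N = sum (cap b) N" "i \<in> N" for a b i
    using sum_mono_inv[of "cap a" N "cap b" i] that \<open>finite N\<close> by (auto simp: cap_def)
  have "cap l' i = cap l i" if "i \<in> N" for i
    using same_caps[OF _ sums that] same_caps[OF _ sums[symmetric] that] by linarith
  then show ?thesis
    unfolding Phi_def Let_def cap_def[symmetric] l'_def[symmetric] by auto
qed

lemma Phi_eq_if_ctilde_eq:
  assumes "std_rule R" "std_problem N c E" and "ctilde N c h = c"
  shows "Phi R N c E h = R N c E"
proof -
  have alloc: "allocation N c E (R N c E)"
    using assms(1,2) by (simp add: std_rule_def)
  then have uncapped: "min (c i) (R N c E i + 0) = R N c E i" if "i \<in> N" for i
    using that by (simp add: allocation_def)
  then have "(\<Sum>i\<in>N. min (c i) (R N (ctilde N c h) E i + 0)) = E"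
    using alloc assms(3) by (simp add: allocation_def)
  then have "Phi R N c E h = restrict (\<lambda>i. min (c i) (R N (ctilde N c h) E i + 0)) N"
    using assms(2) by (intro Phi_eqI) (auto simp: std_problem_def)
  also have "\<dots> = R N c E"
    using alloc uncapped assms(3) by (auto simp: allocation_def restrict_def extensional_def)
  finally show ?thesis .
qed

definition prop_rule :: "nat set \<Rightarrow> vec \<Rightarrow> real \<Rightarrow> vec" where
  "prop_rule N c E = restrict (\<lambda>i. c i * E / (\<Sum>j\<in>N. c j)) N"

lemma prop_rule_sum:
  assumes "M \<subseteq> N"
  shows "(\<Sum>i\<in>M. prop_rule N c E i) = (\<Sum>i\<in>M. c i) * E / (\<Sum>j\<in>N. c j)"
  using assms by (auto simp: prop_rule_def sum_divide_distrib sum_distrib_right subsetD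
      intro!: sum.cong)

lemma std_rule_prop_rule: "std_rule prop_rule"
  unfolding std_rule_def
proof (intro allI impI)
  fix N c E
  assume "std_problem N c E"
  then have C: "0 < (\<Sum>j\<in>N. c j)" "E \<le> (\<Sum>j\<in>N. c j)" "0 \<le> E" "\<forall>i\<in>N. 0 \<le> c i"
    by (auto simp: std_problem_def)
  have "c i * E / (\<Sum>j\<in>N. c j) \<le> c i" if "i \<in> N" for i
    using C that mult_left_mono[of E "\<Sum>j\<in>N. c j" "c i"] by (simp add: divide_simps)
  moreover have "(\<Sum>i\<in>N. prop_rule N c E i) = E"
    using C by (simp add: prop_rule_sum)
  ultimately show "allocation N c E (prop_rule N c E)"
    using C by (auto simp: allocation_def prop_rule_def)
qed

lemma std_claims_mono_prop_rule: "std_claims_mono prop_rule"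
  unfolding std_claims_mono_def
proof (intro allI impI)
  fix N c E i ci'
  assume a: "std_problem N c E \<and> i \<in> N \<and> c i < ci'"
  then have "finite N" "i \<in> N" "c i < ci'" "0 \<le> E" "\<forall>j\<in>N. 0 \<le> c j"
    by (auto simp: std_problem_def)
  define D where "D = (\<Sum>j\<in>N-{i}. c j)"
  have sums: "(\<Sum>j\<in>N. c j) = c i + D" "(\<Sum>j\<in>N. (c(i := ci')) j) = ci' + D"
    using \<open>finite N\<close> \<open>i \<in> N\<close> by (simp_all add: D_def sum.remove)
  have "0 < c i + D"
    using a sums by (simp add: std_problem_def)
  moreover have "0 \<le> D"
    unfolding D_def using \<open>\<forall>j\<in>N. 0 \<le> c j\<close> by (intro sum_nonneg) auto
  moreover have "c i * (ci' + D) * E \<le> ci' * (c i + D) * E"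
    using \<open>c i < ci'\<close> \<open>0 \<le> D\<close> \<open>0 \<le> E\<close>
    by (intro mult_right_mono) (simp_all add: algebra_simps mult_left_mono)
  ultimately have "c i * E / (c i + D) \<le> ci' * E / (ci' + D)"
    using \<open>c i < ci'\<close> by (simp add: divide_simps ac_simps)
  then show "prop_rule N c E i \<le> prop_rule N (c(i := ci')) E i"
    using \<open>i \<in> N\<close> sums by (simp add: prop_rule_def)
qed

lemma std_comp_up_prop_rule: "std_comp_up prop_rule"
  unfolding std_comp_up_def
proof (intro allI impI ballI)
  fix N c E E1 E2 i
  assume a: "std_problem N c E \<and> 0 < E1 \<and> 0 < E2 \<and> E1 + E2 = E" and i: "i \<in> N"
  let ?C = "\<Sum>j\<in>N. c j"
  let ?rest = "restrict (\<lambda>k. c k - prop_rule N c E1 k) N"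
  have C: "0 < ?C" "E1 < ?C"
    using a by (auto simp: std_problem_def)
  have "(\<Sum>k\<in>N. ?rest k) = ?C - E1"
    using C by (simp add: sum_subtractf prop_rule_sum)
  then have "prop_rule N ?rest E2 i = (c i - c i * E1 / ?C) * E2 / (?C - E1)"
    using i by (simp add: prop_rule_def)
  also have "\<dots> = c i * E2 / ?C"
    using C by (simp add: field_simps)
  moreover have "E = E1 + E2"
    using a by simp
  ultimately show "prop_rule N c E i = prop_rule N c E1 i + prop_rule N ?rest E2 i"
    using i by (simp add: prop_rule_def add_divide_distrib distrib_left)
qed

lemma std_comp_down_prop_rule: "std_comp_down prop_rule"
  unfolding std_comp_down_def
proof (intro allI impI ballI)
  fix N c E E' i
  assume a: "std_problem N c E \<and> E < E' \<and> E' \<le> (\<Sum>i\<in>N. c i)" and i: "i \<in> N"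
  then have "0 < (\<Sum>j\<in>N. c j)" "0 < E'"
    by (auto simp: std_problem_def)
  moreover have "(\<Sum>j\<in>N. prop_rule N c E' j) = E'"
    using \<open>0 < (\<Sum>j\<in>N. c j)\<close> by (simp add: prop_rule_sum)
  ultimately show "prop_rule N c E i = prop_rule N (prop_rule N c E') E i"
    using i by (simp add: prop_rule_def)
qed

lemma std_self_dual_prop_rule: "std_self_dual prop_rule"
  unfolding std_self_dual_def
proof (intro allI impI ballI)
  fix N c E i
  assume "std_problem N c E" and "i \<in> N"
  then show "prop_rule N c ((\<Sum>k\<in>N. c k) - E) i = c i - prop_rule N c E i"
    by (simp add: std_problem_def prop_rule_def field_simps)
qed

lemma std_pop_mono_prop_rule: "std_pop_mono prop_rule"
  unfolding std_pop_mono_def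
proof (intro allI impI ballI)
  fix N N' c' E i
  assume a: "N \<subseteq> N' \<and> std_problem N' c' E \<and> std_problem N (restrict c' N) E" and i: "i \<in> N"
  then have "0 \<le> c' i * E" "0 < (\<Sum>j\<in>N. c' j)"
    by (auto simp: std_problem_def)
  moreover have "(\<Sum>j\<in>N. c' j) \<le> (\<Sum>j\<in>N'. c' j)"
    using a by (intro sum_mono2) (auto simp: std_problem_def)
  ultimately show "prop_rule N' c' E i \<le> prop_rule N (restrict c' N) E i"
    using i a by (auto simp: prop_rule_def intro: divide_left_mono)
qed

lemma std_consistent_prop_rule: "std_consistent prop_rule"
  unfolding std_consistent_def
proof (intro allI impI ballI)
  fix N M c E i
  assume a: "std_problem N c E \<and> M \<subset> N \<and>
      std_problem M (restrict c M) (\<Sum>k\<in>M. prop_rule N c E k)" and i: "i \<in> M"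
  then have "0 < (\<Sum>j\<in>M. c j)" "(\<Sum>j\<in>N. c j) \<noteq> 0"
    by (auto simp: std_problem_def)
  then show "prop_rule N c E i = prop_rule M (restrict c M) (\<Sum>k\<in>M. prop_rule N c E k) i"
    using i a by (simp add: prop_rule_sum less_imp_le) (auto simp: prop_rule_def)
qed

text \<open>A standard rule must be defined on every population; the examples live on the agents
  0, 1, 2 and fall back to the proportional rule, which satisfies all six axioms, elsewhere.\<close>
definition triple_or_prop :: "(vec \<Rightarrow> real \<Rightarrow> vec) \<Rightarrow> nat set \<Rightarrow> vec \<Rightarrow> real \<Rightarrow> vec" where
  "triple_or_prop F N c E = (if N = {0,1,2} then F c E else prop_rule N c E)"

lemma std_rule_triple_or_prop:
  assumes "\<And>c E. std_problem {0,1,2} c E \<Longrightarrow> allocation {0,1,2} c E (F c E)"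
  shows "std_rule (triple_or_prop F)"
  using assms std_rule_prop_rule by (simp add: std_rule_def triple_or_prop_def)

lemma std_claims_mono_triple_or_prop:
  assumes "\<And>c E i ci'. std_problem {0,1,2} c E \<Longrightarrow> i \<in> {0,1,2} \<Longrightarrow> c i < ci' \<Longrightarrow>
      F c E i \<le> F (c(i := ci')) E i"
  shows "std_claims_mono (triple_or_prop F)"
  using assms std_claims_mono_prop_rule by (simp add: std_claims_mono_def triple_or_prop_def)

lemma std_comp_up_triple_or_prop:
  assumes "\<And>c E E1 E2 i. std_problem {0,1,2} c E \<Longrightarrow> 0 < E1 \<Longrightarrow> 0 < E2 \<Longrightarrow> E1 + E2 = E \<Longrightarrow>
      i \<in> {0,1,2} \<Longrightarrow> F c E i = F c E1 i + F (restrict (\<lambda>k. c k - F c E1 k) {0,1,2}) E2 i"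
  shows "std_comp_up (triple_or_prop F)"
  using assms std_comp_up_prop_rule by (simp add: std_comp_up_def triple_or_prop_def)

definition priority3 :: "nat \<Rightarrow> nat \<Rightarrow> vec \<Rightarrow> real \<Rightarrow> vec" where
  "priority3 a b c E = restrict (\<lambda>i. if i = a then min (c a) E
      else if i = b then min (c b) (E - min (c a) E)
      else E - min (c a) E - min (c b) (E - min (c a) E)) {0,1,2}"

lemma std_problem_three_agents:
  "std_problem {0,1,2} c E \<Longrightarrow> 0 \<le> c 0 \<and> 0 \<le> c 1 \<and> 0 \<le> c 2 \<and> 0 \<le> E \<and> E \<le> c 0 + c 1 + c 2"
  by (auto simp: std_problem_def)

lemma allocation_priority3:
  assumes ab: "a \<in> {0,1}" "b \<in> {0,1}" "a \<noteq> b" and "std_problem {0,1,2} c E"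
  shows "allocation {0,1,2} c E (priority3 a b c E)"
proof -
  define x where "x = min (c a) E"
  define y where "y = min (c b) (E - x)"
  have "c a + c b = c 0 + c 1"
    using ab by auto
  moreover have "0 \<le> c a" "0 \<le> c b"
    using ab std_problem_three_agents[OF assms(4)] by auto
  ultimately have bounds: "0 \<le> x" "x \<le> c a" "0 \<le> y" "y \<le> c b" "0 \<le> E - x - y" "E - x - y \<le> c 2"
    using std_problem_three_agents[OF assms(4)] by (auto simp: x_def y_def min_def)
  have "priority3 a b c E = restrict (\<lambda>i. if i = a then x else if i = b then y else E - x - y) {0,1,2}"
    unfolding priority3_def x_def y_def ..
  with ab bounds show ?thesis
    by (auto simp: allocation_def)
qed

lemma priority3_comp_up:
  assumes "std_problem {0,1,2} c E" "0 < E1" "0 < E2" "E1 + E2 = E" "i \<in> {0,1,2}"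
  shows "priority3 0 1 c E i =
    priority3 0 1 c E1 i + priority3 0 1 (restrict (\<lambda>k. c k - priority3 0 1 c E1 k) {0,1,2}) E2 i"
  using std_problem_three_agents[OF assms(1)] assms(2-5) by (auto simp: priority3_def min_def)

definition priority_rule :: "nat set \<Rightarrow> vec \<Rightarrow> real \<Rightarrow> vec" where
  "priority_rule = triple_or_prop (priority3 0 1)"

lemma std_rule_priority_rule: "std_rule priority_rule"
  unfolding priority_rule_def by (rule std_rule_triple_or_prop) (rule allocation_priority3, auto)

lemma std_comp_up_priority_rule: "std_comp_up priority_rule"
  unfolding priority_rule_def by (rule std_comp_up_triple_or_prop) (rule priority3_comp_up)

text \<open>Agent 2 is served last in either order, so raising its claim never lowers its own award,
  while the switch of order it may trigger moves awards between agents 0 and 1.\<close>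
definition switching_priority_rule :: "nat set \<Rightarrow> vec \<Rightarrow> real \<Rightarrow> vec" where
  "switching_priority_rule =
    triple_or_prop (\<lambda>c. if c 2 < 1 then priority3 0 1 c else priority3 1 0 c)"

lemma std_rule_switching_priority_rule: "std_rule switching_priority_rule"
  unfolding switching_priority_rule_def
proof (rule std_rule_triple_or_prop)
  fix c E
  assume "std_problem {0,1,2} c E"
  then show "allocation {0,1,2} c E ((if c 2 < 1 then priority3 0 1 c else priority3 1 0 c) E)"
    using allocation_priority3[of 0 1] allocation_priority3[of 1 0] by simp
qed

lemma std_claims_mono_switching_priority_rule: "std_claims_mono switching_priority_rule"
  unfolding switching_priority_rule_def
proof (rule std_claims_mono_triple_or_prop)
  fix c E i ci'
  assume "std_problem {0,1,2} c E" "i \<in> {0,1,2}" "c i < ci'"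
  with std_problem_three_agents[OF this(1)]
  show "(if c 2 < 1 then priority3 0 1 c else priority3 1 0 c) E i \<le>
      (if (c(i := ci')) 2 < 1 then priority3 0 1 (c(i := ci')) else priority3 1 0 (c(i := ci'))) E i"
    by (auto simp: priority3_def min_def)
qed

lemma gen_claims_monoD:
  assumes "gen_claims_mono S" "hist_problem N c E h" "i \<in> N" "c i < ci'"
  shows "S N c E h i \<le> S N (c(i := ci')) E h i"
  using assms unfolding gen_claims_mono_def by blast

lemma gen_comp_upD:
  assumes "gen_comp_up S" "hist_problem N c E h" "0 < E1" "0 < E2" "E1 + E2 = E" "i \<in> N"
  shows "S N c E h i = S N c E1 h i + S N (restrict (\<lambda>k. c k - S N c E1 h k) N) E2 h i"
  using assms unfolding gen_comp_up_def by blast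

lemma gen_comp_downD:
  assumes "gen_comp_down S" "hist_problem N c E h" "E < E'" "E' \<le> (\<Sum>i\<in>N. c i)" "i \<in> N"
  shows "S N c E h i = S N (S N c E' h) E h i"
  using assms unfolding gen_comp_down_def by blast

lemma gen_self_dualD:
  assumes "gen_self_dual S" "hist_problem N c E h" "i \<in> N"
  shows "S N c ((\<Sum>k\<in>N. c k) - E) h i = c i - S N c E h i"
  using assms unfolding gen_self_dual_def by blast

lemma gen_pop_monoD:
  assumes "gen_pop_mono S" "N \<subseteq> N'" "hist_problem N' c' E h'"
    and "hist_problem N (restrict c' N) E (restrict_history h' N)" "i \<in> N"
  shows "S N' c' E h' i \<le> S N (restrict c' N) E (restrict_history h' N) i"
  using assms unfolding gen_pop_mono_def by blast

lemma gen_consistentD: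
  assumes "gen_consistent S" "hist_problem N c E h" "M \<subset> N"
    and "hist_problem M (restrict c M) (\<Sum>k\<in>M. S N c E h k) (restrict_history h M)" "i \<in> M"
  shows "S N c E h i = S M (restrict c M) (\<Sum>k\<in>M. S N c E h k) (restrict_history h M) i"
  using assms unfolding gen_consistent_def by blast

definition vec3 :: "real \<Rightarrow> real \<Rightarrow> real \<Rightarrow> vec" where
  "vec3 a b d = restrict (\<lambda>i. if i = 0 then a else if i = 1 then b else d) {0,1,2}"

lemma vec3_simps [simp]:
  "vec3 a b d 0 = a" "vec3 a b d 1 = b" "vec3 a b d (Suc 0) = b" "vec3 a b d 2 = d"
  "vec3 a b d \<in> extensional {0,1,2}" "vec3 a b d \<in> extensional {0, Suc 0, 2}"
  by (auto simp: vec3_def)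

lemma vec3_upd_2 [simp]: "(vec3 a b d)(2 := d') = vec3 a b d'"
  by (auto simp: vec3_def)

lemma ctilde_single [simp]: "i \<in> N \<Longrightarrow> ctilde N c [(d, x)] i = c i + d i - x i"
  by (simp add: ctilde_def)

lemma hist_problem_vec3:
  assumes "0 \<le> a" "0 \<le> b" "0 \<le> d" "0 < a + b + d" "0 \<le> E" "E \<le> a + b + d"
    and "0 \<le> a'" "0 \<le> b'" "0 \<le> d'"
  shows "hist_problem {0,1,2} (vec3 a b d) E [(vec3 a' b' d', vec3 0 0 0)]"
  using assms by (simp add: hist_problem_def std_problem_def is_history_def allocation_def)

text \<open>In the example for the proportional rule, agent 2 carries an unpaid claim of 3 from the past:
  its accumulated claim 7/2 earns it more than its current claim 1/2, and the uniform top-up that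
  redistributes the excess is not proportional to the claims.\<close>
abbreviation prop_example_claims :: vec where
  "prop_example_claims \<equiv> vec3 2 (1/2) (1/2)"

abbreviation prop_example_history :: history where
  "prop_example_history \<equiv> [(vec3 0 0 3, vec3 0 0 0)]"

lemma hist_problem_prop_example:
  "0 \<le> E \<Longrightarrow> E \<le> 3 \<Longrightarrow> hist_problem {0,1,2} prop_example_claims E prop_example_history"
  by (rule hist_problem_vec3) auto

lemma hist_problem_prop_example_01:
  "0 \<le> E \<Longrightarrow> E \<le> 5/2 \<Longrightarrow>
    hist_problem {0,1} (restrict prop_example_claims {0,1}) E (restrict_history prop_example_history {0,1})"
  by (simp add: hist_problem_def std_problem_def is_history_def allocation_def restrict_history_def)

lemma Phi_prop_rule_example_2:
  "Phi prop_rule {0,1,2} prop_example_claims 2 prop_example_history = vec3 1 (1/2) (1/2)"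
  by (subst Phi_eqI[where l = "1/3"]) (auto simp: prop_rule_def vec3_def)

lemma Phi_prop_rule_example_1:
  "Phi prop_rule {0,1,2} prop_example_claims 1 prop_example_history = vec3 (3/8) (1/8) (1/2)"
  by (subst Phi_eqI[where l = "1/24"]) (auto simp: prop_rule_def vec3_def)

lemma Phi_prop_rule_example_reduced_claims:
  "Phi prop_rule {0,1,2} (vec3 1 (1/2) (1/2)) 1 prop_example_history = vec3 (3/10) (1/5) (1/2)"
  by (subst Phi_eqI[where l = "1/10"]) (auto simp: prop_rule_def vec3_def)

lemma Phi_prop_rule_example_01:
  "0 \<le> E \<Longrightarrow> E \<le> 5/2 \<Longrightarrow>
    Phi prop_rule {0,1} (restrict prop_example_claims {0,1}) E (restrict_history prop_example_history {0,1})
    = prop_rule {0,1} (restrict prop_example_claims {0,1}) E"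
  by (intro Phi_eq_if_ctilde_eq std_rule_prop_rule)
    (auto simp: std_problem_def ctilde_def restrict_history_def)

lemma not_gen_comp_down_Phi_prop_rule: "\<not> gen_comp_down (Phi prop_rule)"
proof
  assume comp_down: "gen_comp_down (Phi prop_rule)"
  have "Phi prop_rule {0,1,2} prop_example_claims 1 prop_example_history 0 =
      Phi prop_rule {0,1,2} (Phi prop_rule {0,1,2} prop_example_claims 2 prop_example_history)
        1 prop_example_history 0"
    by (rule gen_comp_downD[OF comp_down hist_problem_prop_example]) simp_all
  then show False
    unfolding Phi_prop_rule_example_2 Phi_prop_rule_example_1 Phi_prop_rule_example_reduced_claims
    by simp
qed

lemma not_gen_self_dual_Phi_prop_rule: "\<not> gen_self_dual (Phi prop_rule)"
proof
  have total: "(\<Sum>k\<in>{0,1,2}. prop_example_claims k) - 2 = 1"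
    by simp
  assume self_dual: "gen_self_dual (Phi prop_rule)"
  have "Phi prop_rule {0,1,2} prop_example_claims ((\<Sum>k\<in>{0,1,2}. prop_example_claims k) - 2)
      prop_example_history 0 =
    prop_example_claims 0 - Phi prop_rule {0,1,2} prop_example_claims 2 prop_example_history 0"
    by (rule gen_self_dualD[OF self_dual hist_problem_prop_example]) simp_all
  then show False
    unfolding total Phi_prop_rule_example_2 Phi_prop_rule_example_1 by simp
qed

lemma not_gen_pop_mono_Phi_prop_rule: "\<not> gen_pop_mono (Phi prop_rule)"
proof
  assume pop_mono: "gen_pop_mono (Phi prop_rule)"
  have "Phi prop_rule {0,1,2} prop_example_claims 2 prop_example_history 1 \<le>
      Phi prop_rule {0,1} (restrict prop_example_claims {0,1}) 2
        (restrict_history prop_example_history {0,1}) 1"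
    by (rule gen_pop_monoD[OF pop_mono _ hist_problem_prop_example hist_problem_prop_example_01])
      auto
  then show False
    by (simp del: One_nat_def add: Phi_prop_rule_example_2 Phi_prop_rule_example_01 prop_rule_def)
qed

lemma not_gen_consistent_Phi_prop_rule: "\<not> gen_consistent (Phi prop_rule)"
proof
  have subtotal: "(\<Sum>k\<in>{0,1}. Phi prop_rule {0,1,2} prop_example_claims 2 prop_example_history k) = 3/2"
    by (simp del: One_nat_def add: Phi_prop_rule_example_2)
  assume consistent: "gen_consistent (Phi prop_rule)"
  have "Phi prop_rule {0,1,2} prop_example_claims 2 prop_example_history 0 =
      Phi prop_rule {0,1} (restrict prop_example_claims {0,1})
        (\<Sum>k\<in>{0,1}. Phi prop_rule {0,1,2} prop_example_claims 2 prop_example_history k)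
        (restrict_history prop_example_history {0,1}) 0"
    by (rule gen_consistentD[OF consistent hist_problem_prop_example])
      (auto simp del: One_nat_def simp: subtotal hist_problem_prop_example_01)
  then show False
    unfolding subtotal
    by (simp del: One_nat_def add: Phi_prop_rule_example_2 Phi_prop_rule_example_01 prop_rule_def)
qed

abbreviation priority_example_history :: history where
  "priority_example_history \<equiv> [(vec3 1 0 0, vec3 0 0 0)]"

lemma Phi_switching_priority_rule_example:
  "Phi switching_priority_rule {0,1,2} (vec3 1 1 (1/2)) 2 priority_example_history = vec3 1 (1/2) (1/2)"
  by (subst Phi_eqI[where l = "1/2"])
    (auto simp: switching_priority_rule_def triple_or_prop_def priority3_def vec3_def)

lemma Phi_switching_priority_rule_example_raised:
  "Phi switching_priority_rule {0,1,2} (vec3 1 1 1) 2 priority_example_history = vec3 1 1 0"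
  by (subst Phi_eqI[where l = 0])
    (auto simp: switching_priority_rule_def triple_or_prop_def priority3_def vec3_def)

lemma not_gen_claims_mono_Phi_switching_priority_rule:
  "\<not> gen_claims_mono (Phi switching_priority_rule)"
proof
  assume claims_mono: "gen_claims_mono (Phi switching_priority_rule)"
  have "Phi switching_priority_rule {0,1,2} (vec3 1 1 (1/2)) 2 priority_example_history 2 \<le>
      Phi switching_priority_rule {0,1,2} ((vec3 1 1 (1/2))(2 := 1)) 2 priority_example_history 2"
    by (rule gen_claims_monoD[OF claims_mono hist_problem_vec3]) simp_all
  then show False
    unfolding vec3_upd_2 Phi_switching_priority_rule_example Phi_switching_priority_rule_example_raised
    by simp
qed

lemma Phi_priority_rule_example_5_2:
  "Phi priority_rule {0,1,2} (vec3 1 1 1) (5/2) priority_example_history = vec3 1 1 (1/2)"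
  by (subst Phi_eqI[where l = "1/2"])
    (auto simp: priority_rule_def triple_or_prop_def priority3_def vec3_def)

lemma Phi_priority_rule_example_2:
  "Phi priority_rule {0,1,2} (vec3 1 1 1) 2 priority_example_history = vec3 1 (1/2) (1/2)"
  by (subst Phi_eqI[where l = "1/2"])
    (auto simp: priority_rule_def triple_or_prop_def priority3_def vec3_def)

lemma Phi_priority_rule_example_remainder:
  "Phi priority_rule {0,1,2} (vec3 0 (1/2) (1/2)) (1/2) priority_example_history = vec3 0 (1/4) (1/4)"
  by (subst Phi_eqI[where l = "1/4"])
    (auto simp: priority_rule_def triple_or_prop_def priority3_def vec3_def)

lemma not_gen_comp_up_Phi_priority_rule: "\<not> gen_comp_up (Phi priority_rule)"
proof
  have remainder:
    "restrict (\<lambda>k. vec3 1 1 1 k - vec3 1 (1/2) (1/2) k) {0,1,2} = vec3 0 (1/2) (1/2)"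
    by (auto simp: vec3_def)
  assume comp_up: "gen_comp_up (Phi priority_rule)"
  have "Phi priority_rule {0,1,2} (vec3 1 1 1) (5/2) priority_example_history 1 =
      Phi priority_rule {0,1,2} (vec3 1 1 1) 2 priority_example_history 1 +
      Phi priority_rule {0,1,2}
        (restrict (\<lambda>k. vec3 1 1 1 k - Phi priority_rule {0,1,2} (vec3 1 1 1) 2 priority_example_history k)
          {0,1,2})
        (1/2) priority_example_history 1"
    by (rule gen_comp_upD[OF comp_up hist_problem_vec3]) simp_all
  then show False
    unfolding Phi_priority_rule_example_2 remainder
      Phi_priority_rule_example_5_2 Phi_priority_rule_example_remainder
    by simp
qed

theorem theorem2:
  shows "(\<exists>R. std_rule R \<and> std_claims_mono R \<and> \<not> gen_claims_mono (Phi R)) \<and>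
         (\<exists>R. std_rule R \<and> std_comp_up R \<and> \<not> gen_comp_up (Phi R)) \<and>
         (\<exists>R. std_rule R \<and> std_comp_down R \<and> \<not> gen_comp_down (Phi R)) \<and>
         (\<exists>R. std_rule R \<and> std_self_dual R \<and> \<not> gen_self_dual (Phi R)) \<and>
         (\<exists>R. std_rule R \<and> std_pop_mono R \<and> \<not> gen_pop_mono (Phi R)) \<and>
         (\<exists>R. std_rule R \<and> std_consistent R \<and> \<not> gen_consistent (Phi R))"
  using std_rule_switching_priority_rule std_claims_mono_switching_priority_rule
    not_gen_claims_mono_Phi_switching_priority_rule
    std_rule_priority_rule std_comp_up_priority_rule not_gen_comp_up_Phi_priority_rule
    std_rule_prop_rule std_comp_down_prop_rule not_gen_comp_down_Phi_prop_rule
    std_self_dual_prop_rule not_gen_self_dual_Phi_prop_rule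
    std_pop_mono_prop_rule not_gen_pop_mono_Phi_prop_rule
    std_consistent_prop_rule not_gen_consistent_Phi_prop_rule
  by blast

end
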